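(* If a selection $\mathtt{SEL}$ of the consistent set map is $(\gamma,T)$-weakly competitive, then it is $(k\gamma,kT)$-weakly competitive for every $k\in\mathbb{N}$.
   Context: $(\mathbb{T},\mathsf{K},d)$ is a compact parametrization of a set $\mathcal{F}$ of functions $\mathbb{N}\times\mathcal{X}\times\mathcal{U}\to\mathcal{X}$. For a finite data set $\mathcal{D}$ of points $(t,x^+,x,u)$, $\mathsf{P}(\mathcal{D})$ is the closure of $\{\theta\in\mathsf{K}:\exists f\in\mathbb{T}[\theta],\ x^+=f(t,x,u)\ \forall(t,x^+,x,u)\in\mathcal{D}\}$; $\mathtt{SEL}$ is a selection if $\mathtt{SEL}[\mathcal{D}]\in\mathsf{P}(\mathcal{D})$. $\mathtt{SEL}$ is $(\gamma,T)$-weakly competitive if for every data stream $\mathcal{D}_t=(d_1,\dots,d_t)$ with some $f\in\mathcal{F}$ consistent with all $\mathcal{D}_t$, $\theta_t=\mathtt{SEL}[\mathcal{D}_t]$ satisfies $\sum_{t=t_1+1}^{t_2}d(\theta_t,\theta_{t-1})\le\gamma d_H(\mathsf{P}(\mathcal{D}_{t_2}),\mathsf{P}(\mathcal{D}_{t_1}))$ whenever $t_2-t_1\le T$; $d_H$ is the Hausdorff distance. *)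

theory Defs
  imports "HOL-Analysis.Analysis"
begin

text \<open>A data point (t, x+, x, u).\<close>
type_synonym ('x,'u) datapoint = "nat \<times> 'x \<times> 'x \<times> 'u"

text \<open>Hausdorff distance between (nonempty, bounded) subsets of a metric space.\<close>
definition hausdorff_dist :: "'a::metric_space set \<Rightarrow> 'a set \<Rightarrow> real" where
  "hausdorff_dist A B = max (SUP a\<in>A. infdist a B) (SUP b\<in>B. infdist b A)"

definition param_family ::
  "('p \<Rightarrow> (nat \<Rightarrow> 'x \<Rightarrow> 'u \<Rightarrow> 'x) set) \<Rightarrow> 'p set \<Rightarrow> (nat \<Rightarrow> 'x \<Rightarrow> 'u \<Rightarrow> 'x) set" where
  "param_family TT K = (\<Union>\<theta>\<in>K. TT \<theta>)"

definition consistent :: "(nat \<Rightarrow> 'x \<Rightarrow> 'u \<Rightarrow> 'x) \<Rightarrow> ('x,'u) datapoint set \<Rightarrow> bool" where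
  "consistent f D \<longleftrightarrow> (\<forall>(t, xp, x, u)\<in>D. xp = f t x u)"

definition consistent_set ::
  "('p::metric_space \<Rightarrow> (nat \<Rightarrow> 'x \<Rightarrow> 'u \<Rightarrow> 'x) set) \<Rightarrow> 'p set \<Rightarrow> ('x,'u) datapoint set \<Rightarrow> 'p set" where
  "consistent_set TT K D = closure {\<theta>\<in>K. \<exists>f\<in>TT \<theta>. consistent f D}"

definition is_selection ::
  "('p::metric_space \<Rightarrow> (nat \<Rightarrow> 'x \<Rightarrow> 'u \<Rightarrow> 'x) set) \<Rightarrow> 'p set \<Rightarrow> (('x,'u) datapoint list \<Rightarrow> 'p) \<Rightarrow> bool" where
  "is_selection TT K SEL \<longleftrightarrow>
     (\<forall>D. consistent_set TT K (set D) \<noteq> {} \<longrightarrow> SEL D \<in> consistent_set TT K (set D))"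

text \<open>The data set D_t = (d_1,...,d_t) of a data stream ds (ds i is d_i, i \<ge> 1).\<close>
definition data_prefix :: "(nat \<Rightarrow> ('x,'u) datapoint) \<Rightarrow> nat \<Rightarrow> ('x,'u) datapoint list" where
  "data_prefix ds t = map ds [1..<Suc t]"

definition weakly_competitive ::
  "('p::metric_space \<Rightarrow> (nat \<Rightarrow> 'x \<Rightarrow> 'u \<Rightarrow> 'x) set) \<Rightarrow> 'p set \<Rightarrow> (('x,'u) datapoint list \<Rightarrow> 'p)
     \<Rightarrow> real \<Rightarrow> nat \<Rightarrow> bool" where
  "weakly_competitive TT K SEL \<gamma> T \<longleftrightarrow>
     (\<forall>ds :: nat \<Rightarrow> ('x,'u) datapoint.
        (\<exists>f\<in>param_family TT K. \<forall>t. consistent f (set (data_prefix ds t))) \<longrightarrow>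
        (\<forall>t1 t2. t1 \<le> t2 \<and> t2 - t1 \<le> T \<longrightarrow>
           (\<Sum>t\<in>{t1<..t2}. dist (SEL (data_prefix ds t)) (SEL (data_prefix ds (t - 1))))
             \<le> \<gamma> * hausdorff_dist (consistent_set TT K (set (data_prefix ds t2)))
                                    (consistent_set TT K (set (data_prefix ds t1)))))"

end

theory Submission
  imports Defs
begin

text \<open>
  Along a data stream the consistent sets \<open>P(D\<^sub>t)\<close> decrease, and for nested sets the Hausdorff
  distance only grows when the pair is moved apart: \<open>d\<^sub>H(P(D\<^sub>s), P(D\<^sub>t\<^sub>1))\<close> and
  \<open>d\<^sub>H(P(D\<^sub>t\<^sub>2), P(D\<^sub>s))\<close> are both at most \<open>d\<^sub>H(P(D\<^sub>t\<^sub>2), P(D\<^sub>t\<^sub>1))\<close> for \<open>t\<^sub>1 \<le> s \<le> t\<^sub>2\<close>.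
  Cutting a window of length \<open>k T\<close> into \<open>k\<close> windows of length at most \<open>T\<close> and bounding the
  movement of the selection on each piece therefore gives the factor \<open>k \<gamma>\<close>.
  If \<open>\<gamma> < 0\<close> and \<open>T > 0\<close>, the windows of length one force the selection and the
  consistent sets to stay put, so every bound holds trivially.
\<close>

lemma bdd_above_infdist_image:
  assumes "bounded A"
  shows "bdd_above ((\<lambda>a. infdist a B) ` A)"
proof -
  obtain x e where e: "\<forall>a\<in>A. dist x a \<le> e"
    using assms unfolding bounded_def by blast
  have "infdist a B \<le> infdist x B + e" if "a \<in> A" for a
    using infdist_triangle[of a B x] e that dist_commute[of x a] by fastforce
  then show ?thesis by (rule bdd_aboveI2)
qed

lemma SUP_infdist_nonneg:
  assumes "A \<noteq> {}" "bounded A"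
  shows "0 \<le> (SUP a\<in>A. infdist a B)"
proof -
  obtain a where "a \<in> A" using assms(1) by blast
  then show ?thesis
    using bdd_above_infdist_image[OF assms(2)] by (meson cSUP_upper2 infdist_nonneg)
qed

lemma hausdorff_dist_self:
  assumes "A \<noteq> {}"
  shows "hausdorff_dist A A = 0"
  using assms by (simp add: hausdorff_dist_def cong: SUP_cong)

lemma hausdorff_dist_subset:
  assumes "A \<subseteq> B" "A \<noteq> {}" "bounded B"
  shows "hausdorff_dist A B = (SUP b\<in>B. infdist b A)"
proof -
  have "(SUP a\<in>A. infdist a B) = 0"
    using assms(1,2) by (simp add: subsetD cong: SUP_cong)
  moreover have "0 \<le> (SUP b\<in>B. infdist b A)"
    using assms by (intro SUP_infdist_nonneg) auto
  ultimately show ?thesis unfolding hausdorff_dist_def by simp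
qed

lemma hausdorff_dist_nested_mono:
  assumes "A \<subseteq> A'" "A' \<subseteq> B'" "B' \<subseteq> B" "A \<noteq> {}" "bounded B"
  shows "hausdorff_dist A' B' \<le> hausdorff_dist A B"
proof -
  have "bounded B'" using assms(3,5) by (rule bounded_subset[rotated])
  then have "hausdorff_dist A' B' = (SUP b\<in>B'. infdist b A')"
    using assms by (intro hausdorff_dist_subset) auto
  also have "\<dots> \<le> (SUP b\<in>B. infdist b A)"
  proof (rule cSUP_mono)
    show "B' \<noteq> {}" using assms by auto
    show "bdd_above ((\<lambda>b. infdist b A) ` B)"
      using assms(5) by (rule bdd_above_infdist_image)
    show "\<exists>m\<in>B. infdist b A' \<le> infdist m A" if "b \<in> B'" for b
      using assms infdist_mono that by blast
  qed
  also have "\<dots> = hausdorff_dist A B"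
    using assms by (intro hausdorff_dist_subset[symmetric]) auto
  finally show ?thesis .
qed

lemma hausdorff_dist_le_0_imp_eq:
  assumes "A \<subseteq> B" "A \<noteq> {}" "bounded B" "closed A" "hausdorff_dist A B \<le> 0"
  shows "A = B"
proof -
  have "b \<in> A" if "b \<in> B" for b
  proof -
    have "infdist b A \<le> (SUP b\<in>B. infdist b A)"
      using cSUP_upper[OF that bdd_above_infdist_image[OF assms(3)]] .
    also have "\<dots> \<le> 0"
      using hausdorff_dist_subset[OF assms(1-3)] assms(5) by simp
    finally have "infdist b A = 0" by (meson infdist_nonneg order_antisym)
    then show "b \<in> A"
      using in_closure_iff_infdist_zero[OF assms(2)] assms(4) closure_closed by metis
  qed
  then show ?thesis using assms(1) by blast
qed

definition window_competitive ::
  "(nat \<Rightarrow> real) \<Rightarrow> (nat \<Rightarrow> 'a::metric_space set) \<Rightarrow> real \<Rightarrow> nat \<Rightarrow> bool" where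
  "window_competitive S P \<gamma> T \<longleftrightarrow>
     (\<forall>t1 t2. t1 \<le> t2 \<and> t2 - t1 \<le> T \<longrightarrow>
        sum S {t1<..t2} \<le> \<gamma> * hausdorff_dist (P t2) (P t1))"

lemma weakly_competitive_iff_window_competitive:
  "weakly_competitive TT K SEL \<gamma> T \<longleftrightarrow>
     (\<forall>ds. (\<exists>f\<in>param_family TT K. \<forall>t. consistent f (set (data_prefix ds t))) \<longrightarrow>
        window_competitive (\<lambda>t. dist (SEL (data_prefix ds t)) (SEL (data_prefix ds (t - 1))))
          (\<lambda>t. consistent_set TT K (set (data_prefix ds t))) \<gamma> T)"
  unfolding weakly_competitive_def window_competitive_def ..

lemma window_competitive_0:
  assumes "\<And>t. P t \<noteq> {}"
  shows "window_competitive S P \<gamma> 0"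
  unfolding window_competitive_def
proof (intro allI impI)
  fix t1 t2 :: nat assume "t1 \<le> t2 \<and> t2 - t1 \<le> 0"
  then have "t2 = t1" by simp
  then show "sum S {t1<..t2} \<le> \<gamma> * hausdorff_dist (P t2) (P t1)"
    using hausdorff_dist_self[OF assms] by simp
qed

lemma window_competitive_stationary:
  assumes "\<And>t. P (Suc t) = P t" "\<And>t. S (Suc t) = 0" "P 0 \<noteq> {}"
  shows "window_competitive S P \<gamma> T"
proof -
  have P: "P t = P 0" for t by (induction t) (use assms(1) in auto)
  have "S t = 0" if "0 < t" for t
    using assms(2) that gr0_conv_Suc by auto
  then have "sum S {t1<..t2} = 0" for t1 t2
    by (intro sum.neutral) auto
  moreover have "hausdorff_dist (P t2) (P t1) = 0" for t1 t2
    using P[of t1] P[of t2] hausdorff_dist_self[OF assms(3)] by simp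
  ultimately show ?thesis
    unfolding window_competitive_def by simp
qed

lemma window_competitive_scale_nonneg:
  assumes P: "decseq P" "\<And>t. P t \<noteq> {}" "\<And>t. bounded (P t)"
    and "0 \<le> \<gamma>" and wc: "window_competitive S P \<gamma> T"
  shows "window_competitive S P (real k * \<gamma>) (k * T)"
  unfolding window_competitive_def
proof (induction k)
  case 0
  then show ?case by simp
next
  case (Suc k)
  show ?case
  proof (intro allI impI)
    fix t1 t2 assume t12: "t1 \<le> t2 \<and> t2 - t1 \<le> Suc k * T"
    define s where "s = min t2 (t1 + T)"
    have s: "t1 \<le> s" "s \<le> t2" "s - t1 \<le> T" "t2 - s \<le> k * T"
      using t12 by (auto simp: s_def)
    let ?d = "\<lambda>i j. hausdorff_dist (P j) (P i)"
    have "P t2 \<subseteq> P s" "P s \<subseteq> P t1"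
      using decseqD[OF P(1)] s(1,2) by auto
    then have d: "?d t1 s \<le> ?d t1 t2" "?d s t2 \<le> ?d t1 t2"
      using P(2,3) by (auto intro!: hausdorff_dist_nested_mono)
    have "{t1<..t2} = {t1<..s} \<union> {s<..t2}" using s(1,2) by auto
    then have "sum S {t1<..t2} = sum S {t1<..s} + sum S {s<..t2}"
      by (simp add: sum.union_disjoint ivl_disj_int)
    also have "\<dots> \<le> \<gamma> * ?d t1 s + real k * \<gamma> * ?d s t2"
      using wc s Suc.IH unfolding window_competitive_def by (intro add_mono) auto
    also have "\<dots> \<le> \<gamma> * ?d t1 t2 + real k * \<gamma> * ?d t1 t2"
      using d \<open>0 \<le> \<gamma>\<close> by (intro add_mono mult_left_mono) auto
    also have "\<dots> = real (Suc k) * \<gamma> * ?d t1 t2"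
      by (simp add: algebra_simps)
    finally show "sum S {t1<..t2} \<le> real (Suc k) * \<gamma> * ?d t1 t2" .
  qed
qed

lemma window_competitive_negative_imp_stationary:
  assumes P: "decseq P" "\<And>t. P t \<noteq> {}" "\<And>t. bounded (P t)" "\<And>t. closed (P t)"
    and S: "\<And>t. 0 \<le> S t" and "\<gamma> < 0" "0 < T" and wc: "window_competitive S P \<gamma> T"
  shows "P (Suc t) = P t \<and> S (Suc t) = 0"
proof -
  let ?d = "hausdorff_dist (P (Suc t)) (P t)"
  have sub: "P (Suc t) \<subseteq> P t" using decseqD[OF P(1), of t "Suc t"] by simp
  have "0 \<le> ?d"
    using hausdorff_dist_subset[OF sub P(2,3)] SUP_infdist_nonneg[OF P(2,3)] by simp
  have "sum S {t<..Suc t} \<le> \<gamma> * ?d"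
    using wc[unfolded window_competitive_def, rule_format, of t "Suc t"] \<open>0 < T\<close> by simp
  moreover have "{t<..Suc t} = {Suc t}" by auto
  ultimately have step: "S (Suc t) \<le> \<gamma> * ?d" by simp
  then have "0 \<le> \<gamma> * ?d" using S[of "Suc t"] by linarith
  then have "?d = 0" using \<open>\<gamma> < 0\<close> \<open>0 \<le> ?d\<close> by (simp add: zero_le_mult_iff)
  then show ?thesis
    using step S[of "Suc t"] hausdorff_dist_le_0_imp_eq[OF sub P(2,3,4)] by simp
qed

lemma window_competitive_scale:
  assumes P: "decseq P" "\<And>t. P t \<noteq> {}" "\<And>t. bounded (P t)" "\<And>t. closed (P t)"
    and S: "\<And>t. 0 \<le> S t" and wc: "window_competitive S P \<gamma> T"
  shows "window_competitive S P (real k * \<gamma>) (k * T)"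
proof -
  consider "0 \<le> \<gamma>" | "T = 0" | "\<gamma> < 0" "0 < T" by linarith
  then show ?thesis
  proof cases
    case 1
    then show ?thesis by (rule window_competitive_scale_nonneg[OF P(1-3) _ wc])
  next
    case 2
    then show ?thesis using window_competitive_0[OF P(2)] by simp
  next
    case 3
    then have "P (Suc t) = P t \<and> S (Suc t) = 0" for t
      using window_competitive_negative_imp_stationary[OF P S _ _ wc] by blast
    then show ?thesis by (intro window_competitive_stationary P(2)) auto
  qed
qed

lemma consistent_subset:
  "consistent f D' \<Longrightarrow> D \<subseteq> D' \<Longrightarrow> consistent f D"
  unfolding consistent_def by blast

lemma consistent_set_antimono:
  assumes "D \<subseteq> D'"
  shows "consistent_set TT K D' \<subseteq> consistent_set TT K D"
proof -
  have "{\<theta>\<in>K. \<exists>f\<in>TT \<theta>. consistent f D'} \<subseteq> {\<theta>\<in>K. \<exists>f\<in>TT \<theta>. consistent f D}"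
    using assms consistent_subset by blast
  then show ?thesis unfolding consistent_set_def by (rule closure_mono)
qed

lemma consistent_set_nonempty:
  assumes "f \<in> param_family TT K" "consistent f D"
  shows "consistent_set TT K D \<noteq> {}"
proof -
  obtain \<theta> where "\<theta> \<in> K" "f \<in> TT \<theta>"
    using assms(1) unfolding param_family_def by blast
  then have "\<theta> \<in> {\<theta>\<in>K. \<exists>f\<in>TT \<theta>. consistent f D}" using assms(2) by blast
  then show ?thesis unfolding consistent_set_def using closure_subset by blast
qed

lemma bounded_consistent_set:
  assumes "bounded K"
  shows "bounded (consistent_set TT K D)"
proof -
  have "consistent_set TT K D \<subseteq> closure K"
    unfolding consistent_set_def by (rule closure_mono) auto
  then show ?thesis using assms by (meson bounded_closure bounded_subset)
qed

lemma set_data_prefix_mono: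
  "t \<le> t' \<Longrightarrow> set (data_prefix ds t) \<subseteq> set (data_prefix ds t')"
  by (auto simp: data_prefix_def)

lemma consistent_sets_along_stream:
  assumes "bounded K" "f \<in> param_family TT K" "\<And>t. consistent f (set (data_prefix ds t))"
  shows "decseq (\<lambda>t. consistent_set TT K (set (data_prefix ds t)))"
    and "consistent_set TT K (set (data_prefix ds t)) \<noteq> {}"
    and "bounded (consistent_set TT K (set (data_prefix ds t)))"
    and "closed (consistent_set TT K (set (data_prefix ds t)))"
proof -
  show "decseq (\<lambda>t. consistent_set TT K (set (data_prefix ds t)))"
    by (intro antimonoI consistent_set_antimono set_data_prefix_mono)
  show "consistent_set TT K (set (data_prefix ds t)) \<noteq> {}"
    by (rule consistent_set_nonempty[OF assms(2,3)])
  show "bounded (consistent_set TT K (set (data_prefix ds t)))"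
    by (rule bounded_consistent_set[OF assms(1)])
  show "closed (consistent_set TT K (set (data_prefix ds t)))"
    by (simp add: consistent_set_def)
qed

theorem corollary4:
  fixes TT :: "'p::metric_space \<Rightarrow> (nat \<Rightarrow> 'x \<Rightarrow> 'u \<Rightarrow> 'x) set"
    and K :: "'p set"
    and SEL :: "('x,'u) datapoint list \<Rightarrow> 'p"
    and \<gamma> :: real and T :: nat
  assumes "compact K"
    and "is_selection TT K SEL"
    and "weakly_competitive TT K SEL \<gamma> T"
  shows "\<forall>k::nat. weakly_competitive TT K SEL (real k * \<gamma>) (k * T)"
proof (intro allI)
  fix k :: nat
  show "weakly_competitive TT K SEL (real k * \<gamma>) (k * T)"
    unfolding weakly_competitive_iff_window_competitive
  proof (intro allI impI)
    fix ds
    let ?S = "\<lambda>t. dist (SEL (data_prefix ds t)) (SEL (data_prefix ds (t - 1)))"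
    let ?P = "\<lambda>t. consistent_set TT K (set (data_prefix ds t))"
    assume consistent_stream: "\<exists>f\<in>param_family TT K. \<forall>t. consistent f (set (data_prefix ds t))"
    then obtain f where f: "f \<in> param_family TT K" "\<And>t. consistent f (set (data_prefix ds t))"
      by blast
    have "window_competitive ?S ?P \<gamma> T"
      using assms(3)[unfolded weakly_competitive_iff_window_competitive, rule_format,
          OF consistent_stream] .
    with consistent_sets_along_stream[OF compact_imp_bounded[OF assms(1)] f]
    show "window_competitive ?S ?P (real k * \<gamma>) (k * T)"
      by (intro window_competitive_scale) auto
  qed
qed

end
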